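(* Let $G=(V,E)$ be a finite graph without isolated vertices, let $p\in[0,1]$, $t\ge0$, let $\bar{\mathbf x}\in\{\mathcal R,\mathcal B\}^V$ be a configuration and $u\in V$. For $k\in\mathbb N$ let $\mathcal E_k$ be the event that $x_u^{(t+1)}\neq\mathcal B$ under the $(k,p,\mathcal B)$-Edge-Majority dynamics. Then for every $h\in\mathbb N_0$, $$\Pr(\mathcal E_{2h+1}\mid \mathbf X^{(t)}=\bar{\mathbf x})=\Pr(\mathcal E_{2h+2}\mid \mathbf X^{(t)}=\bar{\mathbf x}).$$ The same identity holds when $\mathcal E_k$ is defined with respect to the $(k,p,\mathcal B)$-Node-Majority dynamics instead.
   Context: States are in $\{\mathcal R,\mathcal B\}$; $x_u^{(t)}$ is the state of node $u$ at round $t$ and $\mathbf X^{(t)}$ the configuration at round $t$. $(k,p,\mathcal B)$-Edge-Majority: at each round every node $u$ independently samples $k$ neighbours uniformly at random with replacement; for each sampled neighbour $v$, independently, $u$ sees $v$ as $\mathcal B$ with probability $p$ and otherwise sees $v$'s true current state; $u$'s next state is the state seen more often in the sample, ties broken uniformly at random. $(k,p,\mathcal B)$-Node-Majority: at each round every node $u$ independently samples $k$ neighbours uniformly at random with replacement and draws an independent Bernoulli($p$) variable $M$; if $M=1$ its next state is $\mathcal B$; otherwise its next state is the majority among the true current states of the sampled neighbours, ties broken uniformly at random. *)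

theory Defs
  imports "HOL-Probability.Probability"
begin

datatype colour = Red | Blue

definition simple_graph :: "'a set \<Rightarrow> ('a \<Rightarrow> 'a \<Rightarrow> bool) \<Rightarrow> bool" where
  "simple_graph V E \<longleftrightarrow> finite V \<and> (\<forall>u\<in>V. \<forall>v\<in>V. E u v \<longrightarrow> E v u) \<and> (\<forall>u\<in>V. \<not> E u u)"

definition no_isolated :: "'a set \<Rightarrow> ('a \<Rightarrow> 'a \<Rightarrow> bool) \<Rightarrow> bool" where
  "no_isolated V E \<longleftrightarrow> (\<forall>u\<in>V. \<exists>v\<in>V. E u v)"

definition nbrs :: "'a set \<Rightarrow> ('a \<Rightarrow> 'a \<Rightarrow> bool) \<Rightarrow> 'a \<Rightarrow> 'a set" where
  "nbrs V E u = {v\<in>V. E u v}"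

fun iid_samples :: "nat \<Rightarrow> 'b pmf \<Rightarrow> 'b list pmf" where
  "iid_samples 0 d = return_pmf []"
| "iid_samples (Suc k) d = bind_pmf d (\<lambda>c. map_pmf (Cons c) (iid_samples k d))"

definition majority :: "colour list \<Rightarrow> colour pmf" where
  "majority cs =
     (let nb = length (filter (\<lambda>c. c = Blue) cs); nr = length (filter (\<lambda>c. c = Red) cs) in
      if nb > nr then return_pmf Blue
      else if nr > nb then return_pmf Red
      else pmf_of_set {Red, Blue})"

definition edge_seen :: "'a set \<Rightarrow> ('a \<Rightarrow> 'a \<Rightarrow> bool) \<Rightarrow> real \<Rightarrow> ('a \<Rightarrow> colour) \<Rightarrow> 'a \<Rightarrow> colour pmf" where
  "edge_seen V E p x u =
     bind_pmf (pmf_of_set (nbrs V E u)) (\<lambda>v.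
       map_pmf (\<lambda>b. if b then Blue else x v) (bernoulli_pmf p))"

text \<open>Distribution of x_u^(t+1) given X^(t) = x under (k,p,Blue)-Edge-Majority.\<close>
definition edge_majority_next :: "nat \<Rightarrow> real \<Rightarrow> 'a set \<Rightarrow> ('a \<Rightarrow> 'a \<Rightarrow> bool) \<Rightarrow> ('a \<Rightarrow> colour) \<Rightarrow> 'a \<Rightarrow> colour pmf" where
  "edge_majority_next k p V E x u = bind_pmf (iid_samples k (edge_seen V E p x u)) majority"

text \<open>Distribution of x_u^(t+1) given X^(t) = x under (k,p,Blue)-Node-Majority.\<close>
definition node_majority_next :: "nat \<Rightarrow> real \<Rightarrow> 'a set \<Rightarrow> ('a \<Rightarrow> 'a \<Rightarrow> bool) \<Rightarrow> ('a \<Rightarrow> colour) \<Rightarrow> 'a \<Rightarrow> colour pmf" where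
  "node_majority_next k p V E x u =
     bind_pmf (iid_samples k (pmf_of_set (nbrs V E u))) (\<lambda>vs.
       bind_pmf (bernoulli_pmf p) (\<lambda>M.
         if M then return_pmf Blue else majority (map x vs)))"

end

theory Submission
  imports Defs
begin

text \<open>
  The majority of k i.i.d. colours depends only on the number r of Red votes, which is
  binomial with parameters k and q, the probability of seeing Red.  Adding a vote to
  2h+1 votes changes the outcome only when the first 2h+1 votes split h : h+1 and the
  new vote creates a tie, which is then broken by a fair coin.  So Red gains
  q P(r = h)/2 and loses (1-q) P(r = h+1)/2, and these agree since
  C(2h+1, h) = C(2h+1, h+1).
  Node-Majority only mixes this law with the constant Blue.
\<close>

lemma pmf_add_pmf_eq_1:
  assumes "UNIV = {a, b}" and "a \<noteq> b"
  shows "pmf d a + pmf d b = 1"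
proof -
  have "(\<Sum>c\<in>{a, b}. pmf d c) = 1"
    by (rule sum_pmf_eq_1) (simp, simp add: assms(1)[symmetric])
  with assms(2) show ?thesis by simp
qed

lemma colour_pmf_eqI:
  assumes "pmf d Red = pmf d' Red"
  shows "d = d'"
proof (rule pmf_eqI)
  fix c
  have UNIV_colour: "UNIV = {Red, Blue}" using colour.exhaust by auto
  show "pmf d c = pmf d' c"
    using assms pmf_add_pmf_eq_1[OF UNIV_colour, of d] pmf_add_pmf_eq_1[OF UNIV_colour, of d']
    by (cases c) auto
qed

lemma bool_pmf_eq_bernoulli_pmf: "d = bernoulli_pmf (pmf d True)"
proof (rule pmf_eqI)
  fix b
  have "pmf d True + pmf d False = 1" by (rule pmf_add_pmf_eq_1) auto
  then show "pmf d b = pmf (bernoulli_pmf (pmf d True)) b"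
    by (cases b) (auto simp: pmf_le_1)
qed

lemma iid_samples_eq_replicate_pmf: "iid_samples k d = replicate_pmf k d"
  by (induction k) (simp_all add: map_pmf_def)

lemma replicate_pmf_map_pmf:
  "replicate_pmf k (map_pmf f d) = map_pmf (map f) (replicate_pmf k d)"
  by (induction k) (simp_all add: map_pmf_def bind_assoc_pmf bind_return_pmf)

lemma map_pmf_length_filter_replicate_pmf:
  "map_pmf (\<lambda>xs. length (filter P xs)) (replicate_pmf k d)
     = binomial_pmf k (measure_pmf.prob d {x. P x})"
proof -
  have coin: "map_pmf P d = bernoulli_pmf (measure_pmf.prob d {x. P x})"
    by (subst bool_pmf_eq_bernoulli_pmf) (simp add: pmf_map vimage_def)
  have "binomial_pmf k (measure_pmf.prob d {x. P x})
      = map_pmf (length \<circ> filter id) (replicate_pmf k (map_pmf P d))"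
    unfolding coin by (rule binomial_pmf_altdef) simp
  then show ?thesis
    by (simp add: replicate_pmf_map_pmf map_pmf_comp filter_map)
qed

definition majority_by_count :: "nat \<Rightarrow> nat \<Rightarrow> colour pmf" where
  "majority_by_count k r =
     (if k < 2*r then return_pmf Red else if 2*r < k then return_pmf Blue else pmf_of_set {Red, Blue})"

lemma majority_eq_majority_by_count:
  "majority cs = majority_by_count (length cs) (length (filter (\<lambda>c. c = Red) cs))"
proof -
  have not_Blue: "c \<noteq> Blue \<longleftrightarrow> c = Red" for c
    by (cases c) simp_all
  have "length (filter (\<lambda>c. c = Blue) cs) + length (filter (\<lambda>c. c = Red) cs) = length cs"
    using sum_length_filter_compl[of "\<lambda>c. c = Blue" cs] by (simp add: not_Blue)
  then show ?thesis
    unfolding majority_def majority_by_count_def Let_def by auto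
qed

lemma bind_replicate_pmf_majority:
  "bind_pmf (replicate_pmf k d) majority = bind_pmf (binomial_pmf k (pmf d Red)) (majority_by_count k)"
proof -
  have "bind_pmf (replicate_pmf k d) majority
      = bind_pmf (replicate_pmf k d) (\<lambda>cs. majority_by_count k (length (filter (\<lambda>c. c = Red) cs)))"
    by (rule bind_pmf_cong) (auto simp: majority_eq_majority_by_count set_replicate_pmf)
  also have "\<dots> = bind_pmf (map_pmf (\<lambda>cs. length (filter (\<lambda>c. c = Red) cs)) (replicate_pmf k d))
      (majority_by_count k)"
    by (simp add: bind_map_pmf)
  also have "\<dots> = bind_pmf (binomial_pmf k (pmf d Red)) (majority_by_count k)"
    by (simp add: map_pmf_length_filter_replicate_pmf measure_pmf_single)
  finally show ?thesis .
qed

lemma pmf_majority_by_count_Red: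
  "pmf (majority_by_count k r) Red = (if k < 2*r then 1 else if 2*r < k then 0 else 1/2)"
  by (simp add: majority_by_count_def)

lemma pmf_bind_binomial_pmf:
  assumes "q \<in> {0..1}"
  shows "pmf (bind_pmf (binomial_pmf n q) f) c = (\<Sum>r\<le>n. pmf (binomial_pmf n q) r * pmf (f r) c)"
proof -
  have "set_pmf (binomial_pmf n q) \<subseteq> {..n}"
    using assms by (auto simp: set_pmf_binomial_eq)
  then have "(\<integral>r. pmf (f r) c \<partial>binomial_pmf n q) = (\<Sum>r\<le>n. pmf (f r) c * pmf (binomial_pmf n q) r)"
    by (intro integral_measure_pmf_real) auto
  then show ?thesis
    by (simp add: pmf_bind mult.commute)
qed

lemma binomial_pmf_middle_balance:
  assumes "q \<in> {0..1}"
  shows "q * pmf (binomial_pmf (2*h+1) q) h = (1 - q) * pmf (binomial_pmf (2*h+1) q) (Suc h)"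
proof -
  have "(2*h+1 choose Suc h) = (2*h+1 choose h)"
    by (subst binomial_symmetric) auto
  moreover have "2*h+1 - h = Suc h" "2*h+1 - Suc h = h" by simp_all
  ultimately show ?thesis
    using assms by (simp add: power_Suc algebra_simps)
qed

lemma pmf_majority_by_count_binomial_Suc:
  assumes q: "q \<in> {0..1}"
  shows "pmf (bind_pmf (binomial_pmf (Suc n) q) (majority_by_count (Suc n))) Red
       = (\<Sum>r\<le>n. pmf (binomial_pmf n q) r *
           (q * pmf (majority_by_count (Suc n) (Suc r)) Red
            + (1 - q) * pmf (majority_by_count (Suc n) r) Red))"
proof -
  define B where "B = binomial_pmf n q"
  define g where "g r = pmf (majority_by_count (Suc n) r) Red" for r
  have "pmf (bind_pmf (binomial_pmf (Suc n) q) (majority_by_count (Suc n))) Red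
      = pmf (bind_pmf (bernoulli_pmf q)
          (\<lambda>b. bind_pmf B (\<lambda>r. majority_by_count (Suc n) ((if b then 1 else 0) + r)))) Red"
    using q by (simp add: binomial_pmf_Suc B_def bind_assoc_pmf bind_return_pmf)
  also have "\<dots> = q * pmf (bind_pmf B (\<lambda>r. majority_by_count (Suc n) (Suc r))) Red
        + (1 - q) * pmf (bind_pmf B (majority_by_count (Suc n))) Red"
    using q by (simp add: pmf_bind[of "bernoulli_pmf q"] algebra_simps)
  also have "\<dots> = q * (\<Sum>r\<le>n. pmf B r * g (Suc r)) + (1 - q) * (\<Sum>r\<le>n. pmf B r * g r)"
    unfolding B_def g_def by (simp only: pmf_bind_binomial_pmf[OF q])
  also have "\<dots> = (\<Sum>r\<le>n. pmf B r * (q * g (Suc r) + (1 - q) * g r))"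
    unfolding distrib_left sum.distrib sum_distrib_left by (simp add: mult.left_commute)
  finally show ?thesis by (simp only: B_def g_def)
qed

lemma binomial_majority_even_eq_odd:
  assumes q: "q \<in> {0..1}"
  shows "bind_pmf (binomial_pmf (2*h+2) q) (majority_by_count (2*h+2))
       = bind_pmf (binomial_pmf (2*h+1) q) (majority_by_count (2*h+1))"
proof (rule colour_pmf_eqI)
  define n where "n = 2*h+1"
  define B where "B = binomial_pmf n q"
  define g where "g k r = pmf (majority_by_count k r) Red" for k r
  define D where "D r = pmf B r * (q * g (Suc n) (Suc r) + (1 - q) * g (Suc n) r - g n r)" for r
  have "(\<Sum>r\<le>n. D r) = (\<Sum>r\<in>{h, Suc h}. D r)"
    by (rule sum.mono_neutral_right)
      (auto simp: D_def g_def pmf_majority_by_count_Red n_def algebra_simps)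
  also have "\<dots> = (q * pmf B h - (1 - q) * pmf B (Suc h)) / 2"
    by (simp add: D_def g_def pmf_majority_by_count_Red n_def field_simps)
  also have "\<dots> = 0"
    using binomial_pmf_middle_balance[OF q, of h] by (simp add: B_def n_def)
  finally have "(\<Sum>r\<le>n. D r) = 0" .
  then have "(\<Sum>r\<le>n. pmf B r * (q * g (Suc n) (Suc r) + (1 - q) * g (Suc n) r))
      = (\<Sum>r\<le>n. pmf B r * g n r)"
    unfolding D_def right_diff_distrib sum_subtractf by simp
  moreover have "pmf (bind_pmf (binomial_pmf (Suc n) q) (majority_by_count (Suc n))) Red
      = (\<Sum>r\<le>n. pmf B r * (q * g (Suc n) (Suc r) + (1 - q) * g (Suc n) r))"
    unfolding B_def g_def by (rule pmf_majority_by_count_binomial_Suc[OF q])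
  moreover have "pmf (bind_pmf B (majority_by_count n)) Red = (\<Sum>r\<le>n. pmf B r * g n r)"
    unfolding B_def g_def by (rule pmf_bind_binomial_pmf[OF q])
  moreover have "2*h+2 = Suc n" by (simp add: n_def)
  ultimately show "pmf (bind_pmf (binomial_pmf (2*h+2) q) (majority_by_count (2*h+2))) Red
      = pmf (bind_pmf (binomial_pmf (2*h+1) q) (majority_by_count (2*h+1))) Red"
    unfolding n_def[symmetric] B_def[symmetric] by simp
qed

lemma iid_majority_even_eq_odd:
  "bind_pmf (iid_samples (2*h+2) d) majority = bind_pmf (iid_samples (2*h+1) d) majority"
  by (simp only: iid_samples_eq_replicate_pmf bind_replicate_pmf_majority
      binomial_majority_even_eq_odd pmf_nonneg pmf_le_1 atLeastAtMost_iff)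

lemma edge_majority_next_even_eq_odd:
  "edge_majority_next (2*h+2) p V E x u = edge_majority_next (2*h+1) p V E x u"
  unfolding edge_majority_next_def by (rule iid_majority_even_eq_odd)

lemma node_majority_next_eq_coin_or_majority:
  "node_majority_next k p V E x u =
     bind_pmf (bernoulli_pmf p) (\<lambda>M. if M then return_pmf Blue
       else bind_pmf (iid_samples k (map_pmf x (pmf_of_set (nbrs V E u)))) majority)"
proof -
  have "node_majority_next k p V E x u =
      bind_pmf (bernoulli_pmf p) (\<lambda>M. bind_pmf (iid_samples k (pmf_of_set (nbrs V E u)))
        (\<lambda>vs. if M then return_pmf Blue else majority (map x vs)))"
    unfolding node_majority_next_def by (rule bind_commute_pmf)
  also have "\<dots> = bind_pmf (bernoulli_pmf p) (\<lambda>M. if M then return_pmf Blue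
       else bind_pmf (iid_samples k (map_pmf x (pmf_of_set (nbrs V E u)))) majority)"
    by (intro bind_pmf_cong)
      (simp_all add: iid_samples_eq_replicate_pmf replicate_pmf_map_pmf bind_map_pmf)
  finally show ?thesis .
qed

lemma node_majority_next_even_eq_odd:
  "node_majority_next (2*h+2) p V E x u = node_majority_next (2*h+1) p V E x u"
  by (simp only: node_majority_next_eq_coin_or_majority iid_majority_even_eq_odd)

theorem proposition3p4:
  fixes V :: "'a set" and E :: "'a \<Rightarrow> 'a \<Rightarrow> bool" and p :: real
    and x :: "'a \<Rightarrow> colour" and u :: 'a and h :: nat
  assumes "simple_graph V E" and "no_isolated V E"
    and "0 \<le> p" and "p \<le> 1" and "u \<in> V"
  shows "measure_pmf.prob (edge_majority_next (2*h+1) p V E x u) {c. c \<noteq> Blue}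
           = measure_pmf.prob (edge_majority_next (2*h+2) p V E x u) {c. c \<noteq> Blue}
       \<and> measure_pmf.prob (node_majority_next (2*h+1) p V E x u) {c. c \<noteq> Blue}
           = measure_pmf.prob (node_majority_next (2*h+2) p V E x u) {c. c \<noteq> Blue}"
  by (simp only: edge_majority_next_even_eq_odd node_majority_next_even_eq_odd simp_thms)

end
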